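(* Let $\mathbf{W}=\langle W;\to,\neg,{}^{+},{}^{-},1\rangle$ be a quasi-Wajsberg* algebra and $0:=1\to 1$. Then for any $x,y\in W$: (1) $0\to(\neg x)^{+}=0\to\neg x^{-}$ and $0\to(\neg x)^{-}=0\to\neg x^{+}$; (2) $0\to x^{+-}=0=0\to x^{-+}$; (3) $0\to x^{++}=0\to x^{+}$ and $0\to x^{--}=0\to x^{-}$; (4) $(\neg x)^{+}\to y=\neg x^{-}\to y$, $x\to(\neg y)^{+}=x\to\neg y^{-}$, $(\neg x)^{-}\to y=\neg x^{+}\to y$ and $x\to(\neg y)^{-}=x\to\neg y^{+}$; (5) $x^{+-}\to y=0\to y=x^{-+}\to y$ and $x\to y^{+-}=x\to 0=x\to y^{-+}$; (6) $x^{++}\to y=x^{+}\to y$, $x\to y^{++}=x\to y^{+}$, $x^{--}\to y=x^{-}\to y$ and $x\to y^{--}=x\to y^{-}$.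
   Context: A quasi-Wajsberg* algebra is an algebra $\langle W;\to,\neg,{}^{+},{}^{-},1\rangle$ of type $\langle2,1,1,1,0\rangle$ such that for all $x,y,z\in W$: (QW*1) $x\to y=\neg y\to\neg x$; (QW*2) $(x\to 1)\to((y\to 1)\to z)=(y\to 1)\to((x\to 1)\to z)$; (QW*3) $(1\to x)\to 1=1$; (QW*4) $(z\to z)\to(x\to y)=x\to y$; (QW*5) $(1\to 1)\to x^{+}=((1\to 1)\to x)^{+}=(x\to 1)\to 1$ and $(1\to 1)\to x^{-}=((1\to 1)\to x)^{-}=(x\to\neg 1)\to\neg 1$; (QW*6) $x\to y=(y^{+}\to x^{-})\to(x^{+}\to y^{-})$; (QW*7) $\neg(x\to y)=y\to x$; (QW*8) $\neg\neg x=x$; (QW*9) $(x\to(\neg x\to y))^{+}=x^{+}\to(\neg x^{+}\to y^{+})$; (QW*10) $x\vee y=y\vee x$; (QW*11) $x\vee(y\vee z)=(x\vee y)\vee z$; (QW*12) $x\to(y\vee z)=(x\to y)\vee(x\to z)$; where $x\vee y:=((x^{+}\to y^{+})^{+}\to(\neg x)^{-})\to((y^{-}\to x^{-})^{-}\to x^{-})$. Conventions: ${}^+,{}^-$ bind tighter than $\neg$, which binds tighter than $\to$ (so $\neg x^{-}$ means $\neg(x^{-})$); $x^{+-}$ means $(x^{+})^{-}$, etc. *)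

theory Defs
  imports Main
begin

text \<open>Quasi-Wajsberg* algebra on the whole type 'a (carrier = UNIV).
  imp = \<open>\<to>\<close>, neg = \<open>\<not>\<close>, pl = \<open>+\<close>, mi = \<open>-\<close>, one = 1.\<close>

definition qw_join :: "('a \<Rightarrow> 'a \<Rightarrow> 'a) \<Rightarrow> ('a \<Rightarrow> 'a) \<Rightarrow> ('a \<Rightarrow> 'a) \<Rightarrow> ('a \<Rightarrow> 'a) \<Rightarrow> 'a \<Rightarrow> 'a \<Rightarrow> 'a" where
  "qw_join imp neg pl mi x y =
     imp (imp (pl (imp (pl x) (pl y))) (mi (neg x)))
         (imp (mi (imp (mi y) (mi x))) (mi x))"

definition quasi_wajsberg_star ::
  "('a \<Rightarrow> 'a \<Rightarrow> 'a) \<Rightarrow> ('a \<Rightarrow> 'a) \<Rightarrow> ('a \<Rightarrow> 'a) \<Rightarrow> ('a \<Rightarrow> 'a) \<Rightarrow> 'a \<Rightarrow> bool" where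
  "quasi_wajsberg_star imp neg pl mi one \<longleftrightarrow>
     (\<forall>x y. imp x y = imp (neg y) (neg x)) \<and>
     (\<forall>x y z. imp (imp x one) (imp (imp y one) z) = imp (imp y one) (imp (imp x one) z)) \<and>
     (\<forall>x. imp (imp one x) one = one) \<and>
     (\<forall>x y z. imp (imp z z) (imp x y) = imp x y) \<and>
     (\<forall>x. imp (imp one one) (pl x) = pl (imp (imp one one) x) \<and>
          pl (imp (imp one one) x) = imp (imp x one) one) \<and>
     (\<forall>x. imp (imp one one) (mi x) = mi (imp (imp one one) x) \<and>
          mi (imp (imp one one) x) = imp (imp x (neg one)) (neg one)) \<and>
     (\<forall>x y. imp x y = imp (imp (pl y) (mi x)) (imp (pl x) (mi y))) \<and>
     (\<forall>x y. neg (imp x y) = imp y x) \<and>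
     (\<forall>x. neg (neg x) = x) \<and>
     (\<forall>x y. pl (imp x (imp (neg x) y)) = imp (pl x) (imp (neg (pl x)) (pl y))) \<and>
     (\<forall>x y. qw_join imp neg pl mi x y = qw_join imp neg pl mi y x) \<and>
     (\<forall>x y z. qw_join imp neg pl mi x (qw_join imp neg pl mi y z) =
              qw_join imp neg pl mi (qw_join imp neg pl mi x y) z) \<and>
     (\<forall>x y z. imp x (qw_join imp neg pl mi y z) =
              qw_join imp neg pl mi (imp x y) (imp x z))"

end

theory Submission
  imports Defs
begin

text \<open>By (QW*5), \<open>0 \<rightarrow> _\<close> commutes with \<open>\<^sup>+\<close> and \<open>\<^sup>-\<close> and evaluates
  them as \<open>(x \<rightarrow> 1) \<rightarrow> 1\<close> and \<open>(x \<rightarrow> \<not>1) \<rightarrow> \<not>1\<close>; together with contraposition and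
  \<open>\<not>\<not>x = x\<close> this yields (1) and (2).  Instantiating (QW*6) at \<open>0\<close> gives
  \<open>0 \<rightarrow> x = (x\<^sup>+ \<rightarrow> 0) \<rightarrow> (0 \<rightarrow> x\<^sup>-)\<close>, which turns (2) into (3).  Items (4)--(6) follow
  because \<open>0 \<rightarrow> _\<close> is absorbed on both sides of an implication: \<open>x \<rightarrow> (0 \<rightarrow> y) = x \<rightarrow> y\<close>
  since \<open>y \<or> y = 0 \<rightarrow> y\<close> and \<open>\<rightarrow>\<close> distributes over \<open>\<or>\<close> (QW*12), and
  \<open>(0 \<rightarrow> x) \<rightarrow> y = x \<rightarrow> y\<close> by contraposition.\<close>

locale quasi_wajsberg_star_algebra =
  fixes imp :: "'a \<Rightarrow> 'a \<Rightarrow> 'a" (infixr \<open>\<rightarrow>\<close> 60)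
    and neg pl mi :: "'a \<Rightarrow> 'a" and one :: 'a
  assumes contrapos: "x \<rightarrow> y = neg y \<rightarrow> neg x"
    and one_imp_imp_one: "(one \<rightarrow> x) \<rightarrow> one = one"
    and self_imp_imp: "(z \<rightarrow> z) \<rightarrow> (x \<rightarrow> y) = x \<rightarrow> y"
    and zero_imp_pl: "(one \<rightarrow> one) \<rightarrow> pl x = pl ((one \<rightarrow> one) \<rightarrow> x)"
    and pl_zero_imp: "pl ((one \<rightarrow> one) \<rightarrow> x) = (x \<rightarrow> one) \<rightarrow> one"
    and zero_imp_mi: "(one \<rightarrow> one) \<rightarrow> mi x = mi ((one \<rightarrow> one) \<rightarrow> x)"
    and mi_zero_imp: "mi ((one \<rightarrow> one) \<rightarrow> x) = (x \<rightarrow> neg one) \<rightarrow> neg one"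
    and imp_pl_mi: "x \<rightarrow> y = (pl y \<rightarrow> mi x) \<rightarrow> (pl x \<rightarrow> mi y)"
    and neg_imp: "neg (x \<rightarrow> y) = y \<rightarrow> x"
    and neg_neg: "neg (neg x) = x"
    and imp_join: "x \<rightarrow> qw_join (\<rightarrow>) neg pl mi y z = qw_join (\<rightarrow>) neg pl mi (x \<rightarrow> y) (x \<rightarrow> z)"
begin

abbreviation zero :: 'a where
  "zero \<equiv> one \<rightarrow> one"

lemma imp_self: "x \<rightarrow> x = zero"
proof -
  have "x \<rightarrow> x = zero \<rightarrow> (x \<rightarrow> x)"
    by (rule self_imp_imp [symmetric])
  also have "\<dots> = neg ((x \<rightarrow> x) \<rightarrow> zero)"
    by (rule neg_imp [symmetric])
  also have "\<dots> = zero"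
    by (simp only: self_imp_imp neg_imp)
  finally show ?thesis .
qed

lemma neg_zero: "neg zero = zero"
  by (rule neg_imp)

lemma zero_imp_one: "zero \<rightarrow> one = one"
  by (rule one_imp_imp_one)

lemma zero_imp_imp: "zero \<rightarrow> (x \<rightarrow> y) = x \<rightarrow> y"
  by (rule self_imp_imp)

lemma zero_imp_neg: "zero \<rightarrow> neg x = neg (zero \<rightarrow> x)"
  by (simp only: contrapos [of zero "neg x"] neg_neg neg_zero neg_imp)

lemma imp_zero_imp_zero: "(x \<rightarrow> zero) \<rightarrow> zero = zero \<rightarrow> x"
proof -
  have "(x \<rightarrow> zero) \<rightarrow> zero = neg (zero \<rightarrow> (x \<rightarrow> zero))"
    by (simp only: neg_imp)
  also have "\<dots> = zero \<rightarrow> x"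
    by (simp only: zero_imp_imp neg_imp)
  finally show ?thesis .
qed

lemma pl_zero: "pl zero = zero"
proof -
  have "pl zero = pl (zero \<rightarrow> zero)"
    by (simp only: imp_self [of zero])
  also have "\<dots> = (zero \<rightarrow> one) \<rightarrow> one"
    by (rule pl_zero_imp)
  also have "\<dots> = zero"
    by (simp only: zero_imp_one)
  finally show ?thesis .
qed

lemma mi_zero: "mi zero = zero"
proof -
  have "mi zero = mi (zero \<rightarrow> zero)"
    by (simp only: imp_self [of zero])
  also have "\<dots> = (zero \<rightarrow> neg one) \<rightarrow> neg one"
    by (rule mi_zero_imp)
  also have "\<dots> = neg (zero \<rightarrow> one) \<rightarrow> neg one"
    by (simp only: zero_imp_neg)
  also have "\<dots> = one \<rightarrow> (zero \<rightarrow> one)"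
    by (rule contrapos [symmetric])
  also have "\<dots> = zero"
    by (simp only: zero_imp_one)
  finally show ?thesis .
qed

lemma zero_imp_eq: "zero \<rightarrow> x = (pl x \<rightarrow> zero) \<rightarrow> (zero \<rightarrow> mi x)"
  using imp_pl_mi [of zero x] by (simp only: pl_zero mi_zero)

lemma zero_imp_pl_neg: "zero \<rightarrow> pl (neg x) = zero \<rightarrow> neg (mi x)"
proof -
  have "zero \<rightarrow> pl (neg x) = (neg x \<rightarrow> one) \<rightarrow> one"
    by (simp only: zero_imp_pl pl_zero_imp)
  also have "\<dots> = (neg one \<rightarrow> x) \<rightarrow> one"
    by (simp only: contrapos [of "neg x" one] neg_neg)
  also have "\<dots> = neg one \<rightarrow> (x \<rightarrow> neg one)"
    by (simp only: contrapos [of "neg one \<rightarrow> x" one] neg_imp)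
  also have "\<dots> = neg (mi (zero \<rightarrow> x))"
    by (simp only: mi_zero_imp neg_imp)
  also have "\<dots> = zero \<rightarrow> neg (mi x)"
    by (simp only: zero_imp_mi zero_imp_neg)
  finally show ?thesis .
qed

lemma zero_imp_mi_neg: "zero \<rightarrow> mi (neg x) = zero \<rightarrow> neg (pl x)"
proof -
  have "zero \<rightarrow> pl x = neg (zero \<rightarrow> mi (neg x))"
    using zero_imp_pl_neg [of "neg x"] by (simp only: neg_neg zero_imp_neg)
  then show ?thesis
    by (simp only: zero_imp_neg neg_neg)
qed

lemma imp_one_imp_neg_one_imp_neg_one: "((x \<rightarrow> one) \<rightarrow> neg one) \<rightarrow> neg one = zero"
proof -
  have "(x \<rightarrow> one) \<rightarrow> neg one = one \<rightarrow> (one \<rightarrow> x)"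
    by (simp only: contrapos [of "x \<rightarrow> one" "neg one"] neg_neg neg_imp)
  also have "(one \<rightarrow> (one \<rightarrow> x)) \<rightarrow> neg one = one \<rightarrow> ((one \<rightarrow> x) \<rightarrow> one)"
    by (simp only: contrapos [of "one \<rightarrow> (one \<rightarrow> x)" "neg one"] neg_neg neg_imp)
  also have "\<dots> = zero"
    by (simp only: one_imp_imp_one)
  finally show ?thesis .
qed

lemma zero_imp_mi_pl: "zero \<rightarrow> mi (pl x) = zero"
proof -
  have "zero \<rightarrow> mi (pl x) = mi (zero \<rightarrow> (zero \<rightarrow> pl x))"
    by (simp only: zero_imp_mi zero_imp_imp)
  also have "\<dots> = ((zero \<rightarrow> pl x) \<rightarrow> neg one) \<rightarrow> neg one"
    by (rule mi_zero_imp)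
  also have "\<dots> = zero"
    by (simp only: zero_imp_pl pl_zero_imp imp_one_imp_neg_one_imp_neg_one)
  finally show ?thesis .
qed

lemma zero_imp_pl_mi: "zero \<rightarrow> pl (mi x) = zero"
proof -
  have "zero \<rightarrow> mi x = zero \<rightarrow> neg (pl (neg x))"
    using zero_imp_mi_neg [of "neg x"] by (simp only: neg_neg)
  then have "zero \<rightarrow> pl (mi x) = zero \<rightarrow> pl (neg (pl (neg x)))"
    by (simp only: zero_imp_pl)
  also have "\<dots> = zero \<rightarrow> neg (mi (pl (neg x)))"
    by (rule zero_imp_pl_neg)
  also have "\<dots> = zero"
    by (simp only: zero_imp_neg zero_imp_mi_pl neg_zero)
  finally show ?thesis .
qed

lemma zero_imp_pl_pl: "zero \<rightarrow> pl (pl x) = zero \<rightarrow> pl x"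
proof -
  have "zero \<rightarrow> pl x = (pl (pl x) \<rightarrow> zero) \<rightarrow> zero"
    using zero_imp_eq [of "pl x"] by (simp only: zero_imp_mi_pl)
  then show ?thesis
    by (simp only: imp_zero_imp_zero)
qed

lemma zero_imp_mi_mi: "zero \<rightarrow> mi (mi x) = zero \<rightarrow> mi x"
proof -
  have "pl (mi x) \<rightarrow> zero = zero"
    using arg_cong [where f = neg, OF zero_imp_pl_mi [of x]] by (simp only: neg_imp neg_zero)
  then show ?thesis
    using zero_imp_eq [of "mi x"] by (simp only: zero_imp_imp)
qed

lemma join_self: "qw_join (\<rightarrow>) neg pl mi x x = zero \<rightarrow> x"
proof -
  have "qw_join (\<rightarrow>) neg pl mi x x = (zero \<rightarrow> mi (neg x)) \<rightarrow> (zero \<rightarrow> mi x)"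
    by (simp only: qw_join_def imp_self [of "pl x"] imp_self [of "mi x"] pl_zero mi_zero)
  also have "\<dots> = (pl x \<rightarrow> zero) \<rightarrow> (zero \<rightarrow> mi x)"
    by (simp only: zero_imp_mi_neg zero_imp_neg neg_imp)
  also have "\<dots> = zero \<rightarrow> x"
    by (rule zero_imp_eq [symmetric])
  finally show ?thesis .
qed

lemma imp_zero_imp: "x \<rightarrow> (zero \<rightarrow> y) = x \<rightarrow> y"
proof -
  have "x \<rightarrow> (zero \<rightarrow> y) = x \<rightarrow> qw_join (\<rightarrow>) neg pl mi y y"
    by (simp only: join_self)
  also have "\<dots> = qw_join (\<rightarrow>) neg pl mi (x \<rightarrow> y) (x \<rightarrow> y)"
    by (rule imp_join)
  also have "\<dots> = x \<rightarrow> y"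
    by (simp only: join_self zero_imp_imp)
  finally show ?thesis .
qed

lemma zero_imp_imp_left: "(zero \<rightarrow> x) \<rightarrow> y = x \<rightarrow> y"
proof -
  have "(zero \<rightarrow> x) \<rightarrow> y = neg y \<rightarrow> neg (zero \<rightarrow> x)"
    by (rule contrapos)
  also have "\<dots> = neg y \<rightarrow> neg x"
    by (simp only: zero_imp_neg [symmetric] imp_zero_imp)
  also have "\<dots> = x \<rightarrow> y"
    by (rule contrapos [symmetric])
  finally show ?thesis .
qed

lemma imp_left_cong_zero_imp:
  assumes "zero \<rightarrow> a = zero \<rightarrow> b"
  shows "a \<rightarrow> y = b \<rightarrow> y"
  by (metis assms zero_imp_imp_left)

lemma imp_right_cong_zero_imp:
  assumes "zero \<rightarrow> a = zero \<rightarrow> b"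
  shows "x \<rightarrow> a = x \<rightarrow> b"
  by (metis assms imp_zero_imp)

end

theorem proposition3p4:
  fixes imp :: "'a \<Rightarrow> 'a \<Rightarrow> 'a" and neg pl mi :: "'a \<Rightarrow> 'a" and one :: 'a
  assumes "quasi_wajsberg_star imp neg pl mi one"
  defines "zero \<equiv> imp one one"
  shows
    "(\<forall>x. imp zero (pl (neg x)) = imp zero (neg (mi x)) \<and>
         imp zero (mi (neg x)) = imp zero (neg (pl x))) \<and>
     (\<forall>x. imp zero (mi (pl x)) = zero \<and> zero = imp zero (pl (mi x))) \<and>
     (\<forall>x. imp zero (pl (pl x)) = imp zero (pl x) \<and> imp zero (mi (mi x)) = imp zero (mi x)) \<and>
     (\<forall>x y. imp (pl (neg x)) y = imp (neg (mi x)) y \<and>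
           imp x (pl (neg y)) = imp x (neg (mi y)) \<and>
           imp (mi (neg x)) y = imp (neg (pl x)) y \<and>
           imp x (mi (neg y)) = imp x (neg (pl y))) \<and>
     (\<forall>x y. imp (mi (pl x)) y = imp zero y \<and> imp zero y = imp (pl (mi x)) y \<and>
           imp x (mi (pl y)) = imp x zero \<and> imp x zero = imp x (pl (mi y))) \<and>
     (\<forall>x y. imp (pl (pl x)) y = imp (pl x) y \<and> imp x (pl (pl y)) = imp x (pl y) \<and>
           imp (mi (mi x)) y = imp (mi x) y \<and> imp x (mi (mi y)) = imp x (mi y))"
proof -
  interpret quasi_wajsberg_star_algebra imp neg pl mi one
    using assms(1) unfolding quasi_wajsberg_star_def
    by unfold_locales (elim conjE; metis)+
  have zero_imp_zero: "imp zero zero = zero"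
    unfolding zero_def by (rule imp_self)
  have zero_laws:
    "imp zero (pl (neg x)) = imp zero (neg (mi x))"
    "imp zero (mi (neg x)) = imp zero (neg (pl x))"
    "imp zero (mi (pl x)) = zero"
    "imp zero (pl (mi x)) = zero"
    "imp zero (pl (pl x)) = imp zero (pl x)"
    "imp zero (mi (mi x)) = imp zero (mi x)" for x
    unfolding zero_def
    by (rule zero_imp_pl_neg zero_imp_mi_neg zero_imp_mi_pl zero_imp_pl_mi zero_imp_pl_pl
        zero_imp_mi_mi)+
  have imp_left_cong: "imp a y = imp b y" and imp_right_cong: "imp x a = imp x b"
    if "imp zero a = imp zero b" for a b x y
    using that imp_left_cong_zero_imp imp_right_cong_zero_imp unfolding zero_def by blast+
  show ?thesis
    by (intro conjI allI; metis imp_left_cong imp_right_cong zero_laws zero_imp_zero)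
qed

end
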